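(* Let $\tilde{\mathfrak g}$ be a real solvable Lie algebra with an Einstein metric $\langle,\rangle$ (i.e. $\widetilde{\operatorname{Ric}}=\lambda\,\mathrm{id}$ for some $\lambda\in\mathbb R$) and a standard decomposition $\tilde{\mathfrak g}=\mathfrak g\oplus^\perp\mathfrak a$, and assume that $\operatorname{ad}X$ is normal (i.e. commutes with its $\langle,\rangle$-adjoint) for every $X\in\mathfrak a$. Let $H\in\tilde{\mathfrak g}$ be defined by $\langle H,v\rangle=\operatorname{Tr}(\operatorname{ad}v)$ for all $v\in\tilde{\mathfrak g}$. If $\mathfrak b$ is a subspace of $\mathfrak a$ containing $H$ on which the restriction of the metric is nondegenerate, then the subalgebra $\mathfrak g\oplus^\perp\mathfrak b$ with the restricted metric is also Einstein.
   Context: A metric on a Lie algebra is a nondegenerate symmetric bilinear form, possibly indefinite; Ricci operators are those of the corresponding left-invariant pseudo-Riemannian metrics on simply connected Lie groups. A standard decomposition of a metric Lie algebra $\tilde{\mathfrak g}$ is a decomposition $\tilde{\mathfrak g}=\mathfrak g\oplus^\perp\mathfrak a$ as an orthogonal direct sum of vector spaces, where $\mathfrak g$ is a nilpotent ideal and $\mathfrak a$ is an abelian subalgebra. *)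

theory Defs
  imports "HOL-Analysis.Analysis"
begin

text \<open>Lie algebras are modelled as subspaces G of a finite-dimensional real vector space
  'v (of class euclidean_space; its inner product is never used), with a bracket br on 'v
  whose Lie algebra axioms are required on G only. A metric is a function g on 'v which is
  symmetric, bilinear and nondegenerate on G (possibly indefinite).\<close>

definition lie_algebra :: "'v::euclidean_space set \<Rightarrow> ('v \<Rightarrow> 'v \<Rightarrow> 'v) \<Rightarrow> bool" where
  "lie_algebra G br \<longleftrightarrow> subspace G \<and>
     (\<forall>x\<in>G. \<forall>y\<in>G. br x y \<in> G) \<and>
     (\<forall>x\<in>G. \<forall>y\<in>G. \<forall>z\<in>G. br (x + y) z = br x z + br y z \<and> br z (x + y) = br z x + br z y) \<and>
     (\<forall>x\<in>G. \<forall>y\<in>G. \<forall>a::real. br (a *\<^sub>R x) y = a *\<^sub>R br x y \<and> br y (a *\<^sub>R x) = a *\<^sub>R br y x) \<and>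
     (\<forall>x\<in>G. br x x = 0) \<and>
     (\<forall>x\<in>G. \<forall>y\<in>G. \<forall>z\<in>G. br x (br y z) + br y (br z x) + br z (br x y) = 0)"

definition subalgebra :: "'v::euclidean_space set \<Rightarrow> 'v set \<Rightarrow> ('v \<Rightarrow> 'v \<Rightarrow> 'v) \<Rightarrow> bool" where
  "subalgebra S G br \<longleftrightarrow> subspace S \<and> S \<subseteq> G \<and> (\<forall>x\<in>S. \<forall>y\<in>S. br x y \<in> S)"

definition lie_ideal :: "'v::euclidean_space set \<Rightarrow> 'v set \<Rightarrow> ('v \<Rightarrow> 'v \<Rightarrow> 'v) \<Rightarrow> bool" where
  "lie_ideal N G br \<longleftrightarrow> subspace N \<and> N \<subseteq> G \<and> (\<forall>x\<in>G. \<forall>y\<in>N. br x y \<in> N)"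

definition abelian_subalgebra :: "'v::euclidean_space set \<Rightarrow> 'v set \<Rightarrow> ('v \<Rightarrow> 'v \<Rightarrow> 'v) \<Rightarrow> bool" where
  "abelian_subalgebra A G br \<longleftrightarrow> subspace A \<and> A \<subseteq> G \<and> (\<forall>x\<in>A. \<forall>y\<in>A. br x y = 0)"

fun derived_series :: "'v::euclidean_space set \<Rightarrow> ('v \<Rightarrow> 'v \<Rightarrow> 'v) \<Rightarrow> nat \<Rightarrow> 'v set" where
  "derived_series G br 0 = G"
| "derived_series G br (Suc k) =
     span {br x y | x y. x \<in> derived_series G br k \<and> y \<in> derived_series G br k}"

fun lower_central_series :: "'v::euclidean_space set \<Rightarrow> ('v \<Rightarrow> 'v \<Rightarrow> 'v) \<Rightarrow> nat \<Rightarrow> 'v set" where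
  "lower_central_series G br 0 = G"
| "lower_central_series G br (Suc k) =
     span {br x y | x y. x \<in> G \<and> y \<in> lower_central_series G br k}"

definition solvable_lie :: "'v::euclidean_space set \<Rightarrow> ('v \<Rightarrow> 'v \<Rightarrow> 'v) \<Rightarrow> bool" where
  "solvable_lie G br \<longleftrightarrow> lie_algebra G br \<and> (\<exists>k. derived_series G br k = {0})"

definition nilpotent_lie :: "'v::euclidean_space set \<Rightarrow> ('v \<Rightarrow> 'v \<Rightarrow> 'v) \<Rightarrow> bool" where
  "nilpotent_lie G br \<longleftrightarrow> lie_algebra G br \<and> (\<exists>k. lower_central_series G br k = {0})"

definition metric_on :: "'v::euclidean_space set \<Rightarrow> ('v \<Rightarrow> 'v \<Rightarrow> real) \<Rightarrow> bool" where
  "metric_on G g \<longleftrightarrow>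
     (\<forall>x\<in>G. \<forall>y\<in>G. g x y = g y x) \<and>
     (\<forall>x\<in>G. \<forall>y\<in>G. \<forall>z\<in>G. g (x + y) z = g x z + g y z) \<and>
     (\<forall>x\<in>G. \<forall>y\<in>G. \<forall>a::real. g (a *\<^sub>R x) y = a * g x y) \<and>
     (\<forall>x\<in>G. (\<forall>y\<in>G. g x y = 0) \<longrightarrow> x = 0)"

definition metric_lie_algebra :: "'v::euclidean_space set \<Rightarrow> ('v \<Rightarrow> 'v \<Rightarrow> 'v) \<Rightarrow> ('v \<Rightarrow> 'v \<Rightarrow> real) \<Rightarrow> bool" where
  "metric_lie_algebra G br g \<longleftrightarrow> lie_algebra G br \<and> metric_on G g"

definition ltrace :: "'v::euclidean_space set \<Rightarrow> ('v \<Rightarrow> 'v) \<Rightarrow> real" where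
  "ltrace L f = (let B = (SOME B. B \<subseteq> L \<and> independent B \<and> span B = L)
                 in \<Sum>b\<in>B. representation B (f b) b)"

definition ad :: "('v \<Rightarrow> 'v \<Rightarrow> 'v) \<Rightarrow> 'v \<Rightarrow> 'v \<Rightarrow> 'v" where
  "ad br x = (\<lambda>y. br x y)"

definition metric_adjoint :: "'v::euclidean_space set \<Rightarrow> ('v \<Rightarrow> 'v \<Rightarrow> real) \<Rightarrow> ('v \<Rightarrow> 'v) \<Rightarrow> 'v \<Rightarrow> 'v" where
  "metric_adjoint L g f y = (THE z. z \<in> L \<and> (\<forall>w\<in>L. g z w = g y (f w)))"

definition normal_op :: "'v::euclidean_space set \<Rightarrow> ('v \<Rightarrow> 'v \<Rightarrow> real) \<Rightarrow> ('v \<Rightarrow> 'v) \<Rightarrow> bool" where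
  "normal_op L g f \<longleftrightarrow>
     (\<forall>y\<in>L. f (metric_adjoint L g f y) = metric_adjoint L g f (f y))"

text \<open>Levi-Civita connection of the left-invariant metric (Koszul formula):
  2 g(nabla_X Y, Z) = g([X,Y],Z) - g([Y,Z],X) + g([Z,X],Y).\<close>
definition levi_civita :: "'v::euclidean_space set \<Rightarrow> ('v \<Rightarrow> 'v \<Rightarrow> 'v) \<Rightarrow> ('v \<Rightarrow> 'v \<Rightarrow> real) \<Rightarrow> 'v \<Rightarrow> 'v \<Rightarrow> 'v" where
  "levi_civita L br g X Y = (THE Z. Z \<in> L \<and>
     (\<forall>W\<in>L. 2 * g Z W = g (br X Y) W - g (br Y W) X + g (br W X) Y))"

definition curvature :: "'v::euclidean_space set \<Rightarrow> ('v \<Rightarrow> 'v \<Rightarrow> 'v) \<Rightarrow> ('v \<Rightarrow> 'v \<Rightarrow> real) \<Rightarrow> 'v \<Rightarrow> 'v \<Rightarrow> 'v \<Rightarrow> 'v" where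
  "curvature L br g X Y Z =
     levi_civita L br g X (levi_civita L br g Y Z)
     - levi_civita L br g Y (levi_civita L br g X Z)
     - levi_civita L br g (br X Y) Z"

definition ricci_tensor :: "'v::euclidean_space set \<Rightarrow> ('v \<Rightarrow> 'v \<Rightarrow> 'v) \<Rightarrow> ('v \<Rightarrow> 'v \<Rightarrow> real) \<Rightarrow> 'v \<Rightarrow> 'v \<Rightarrow> real" where
  "ricci_tensor L br g Y Z = ltrace L (\<lambda>X. curvature L br g X Y Z)"

definition ricci_op :: "'v::euclidean_space set \<Rightarrow> ('v \<Rightarrow> 'v \<Rightarrow> 'v) \<Rightarrow> ('v \<Rightarrow> 'v \<Rightarrow> real) \<Rightarrow> 'v \<Rightarrow> 'v" where
  "ricci_op L br g Y = (THE R. R \<in> L \<and> (\<forall>Z\<in>L. g R Z = ricci_tensor L br g Y Z))"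

definition einstein :: "'v::euclidean_space set \<Rightarrow> ('v \<Rightarrow> 'v \<Rightarrow> 'v) \<Rightarrow> ('v \<Rightarrow> 'v \<Rightarrow> real) \<Rightarrow> bool" where
  "einstein L br g \<longleftrightarrow> metric_lie_algebra L br g \<and>
     (\<exists>c::real. \<forall>Y\<in>L. ricci_op L br g Y = c *\<^sub>R Y)"

definition standard_decomposition ::
  "'v::euclidean_space set \<Rightarrow> ('v \<Rightarrow> 'v \<Rightarrow> 'v) \<Rightarrow> ('v \<Rightarrow> 'v \<Rightarrow> real) \<Rightarrow> 'v set \<Rightarrow> 'v set \<Rightarrow> bool" where
  "standard_decomposition G br g N A \<longleftrightarrow>
     lie_ideal N G br \<and> nilpotent_lie N br \<and> abelian_subalgebra A G br \<and>
     N \<inter> A = {0} \<and> G = {n + a | n a. n \<in> N \<and> a \<in> A} \<and>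
     (\<forall>n\<in>N. \<forall>a\<in>A. g n a = 0)"

end

theory Submission
  imports Defs
begin

text \<open>
  Let C be the orthogonal complement of B in A, so that G = L \<oplus> C orthogonally with
  L = N \<oplus> B, and note that [G, G] \<subseteq> N \<subseteq> L. Compute the Ricci tensor of G on L in a dual
  basis adapted to this splitting. On the L-directions the Gauss equation applies: the
  Levi-Civita connections of G and L differ by a C-valued second fundamental form, so the
  L-part of the trace is the Ricci tensor of L plus correction terms. Those involving tr(ad c),
  c \<in> C, vanish because tr(ad c) = \<langle>H, c\<rangle> = 0 for H \<in> B; the remaining ones become traces
  over C, and they cancel exactly against the C-part of the Ricci trace, which is evaluated
  using that the ad w, w \<in> A, are commuting normal operators. Hence the Ricci tensors of G and
  L agree on L, and L inherits the Einstein condition.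
\<close>

lemma sum_scaleR_coefficients_unique:
  fixes B :: "'v::real_vector set"
  assumes "independent B" "finite B" "(\<Sum>b\<in>B. c b *\<^sub>R b) = (\<Sum>b\<in>B. c' b *\<^sub>R b)" "b \<in> B"
  shows "c b = c' b"
proof (rule ccontr)
  assume ne: "c b \<noteq> c' b"
  have "(\<Sum>b\<in>B. (c b - c' b) *\<^sub>R b) = 0"
    using assms(3) by (simp add: scaleR_diff_left sum_subtractf)
  then have "dependent B"
    using ne assms(2,4) by (subst dependent_finite) (auto intro!: exI[of _ "\<lambda>b. c b - c' b"])
  with assms(1) show False by simp
qed

lemma additive_on_sum_scaleR:
  fixes f :: "'v::real_vector \<Rightarrow> 'w::real_vector"
  assumes add: "\<And>x y. x \<in> U \<Longrightarrow> y \<in> U \<Longrightarrow> f (x + y) = f x + f y"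
    and scale: "\<And>x a. x \<in> U \<Longrightarrow> f (a *\<^sub>R x) = a *\<^sub>R f x"
    and "subspace U" "finite I" "\<And>i. i \<in> I \<Longrightarrow> v i \<in> U"
  shows "f (\<Sum>i\<in>I. c i *\<^sub>R v i) = (\<Sum>i\<in>I. c i *\<^sub>R f (v i))"
  using assms(4,5)
proof (induction I rule: finite_induct)
  case empty
  show ?case using scale[of 0 0] \<open>subspace U\<close> by (simp add: subspace_0)
next
  case (insert i I)
  have "(\<Sum>j\<in>I. c j *\<^sub>R v j) \<in> U" "c i *\<^sub>R v i \<in> U"
    using insert.prems \<open>subspace U\<close> by (auto intro!: subspace_sum simp: subspace_scale)
  with insert show ?case by (simp add: add scale)
qed

lemma sum_union_disjoint_cases:
  assumes "finite E1" "finite E2" "E1 \<inter> E2 = {}"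
  shows "(\<Sum>e\<in>E1 \<union> E2. F e (if e \<in> E1 then d1 e else d2 e)) = (\<Sum>e\<in>E1. F e (d1 e)) + (\<Sum>e\<in>E2. F e (d2 e))"
proof -
  have "(\<Sum>e\<in>E2. F e (if e \<in> E1 then d1 e else d2 e)) = (\<Sum>e\<in>E2. F e (d2 e))"
    using assms(3) by (intro sum.cong) auto
  then show ?thesis using assms by (simp add: sum.union_disjoint)
qed

section \<open>Dual bases for an indefinite metric\<close>

locale metric_subspace =
  fixes U :: "'v::euclidean_space set" and g :: "'v \<Rightarrow> 'v \<Rightarrow> real"
  assumes subspace: "subspace U" and metric: "metric_on U g"
begin

lemma g_sym: "x \<in> U \<Longrightarrow> y \<in> U \<Longrightarrow> g x y = g y x"
  and g_add_left: "x \<in> U \<Longrightarrow> y \<in> U \<Longrightarrow> z \<in> U \<Longrightarrow> g (x + y) z = g x z + g y z"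
  and g_scale_left: "x \<in> U \<Longrightarrow> y \<in> U \<Longrightarrow> g (a *\<^sub>R x) y = a * g x y"
  and g_nondegenerate: "x \<in> U \<Longrightarrow> (\<And>y. y \<in> U \<Longrightarrow> g x y = 0) \<Longrightarrow> x = 0"
  using metric unfolding metric_on_def by blast+

lemma U_closed: "x \<in> U \<Longrightarrow> y \<in> U \<Longrightarrow> x + y \<in> U" "x \<in> U \<Longrightarrow> a *\<^sub>R x \<in> U" "0 \<in> U"
  "x \<in> U \<Longrightarrow> y \<in> U \<Longrightarrow> x - y \<in> U" "x \<in> U \<Longrightarrow> - x \<in> U"
  using subspace by (auto simp: subspace_add subspace_scale subspace_0 subspace_diff subspace_neg)

lemma U_sum: "(\<And>i. i \<in> I \<Longrightarrow> v i \<in> U) \<Longrightarrow> (\<Sum>i\<in>I. c i *\<^sub>R v i) \<in> U"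
  by (intro subspace_sum[OF subspace] subspace_scale[OF subspace])

lemma g_add_right: "x \<in> U \<Longrightarrow> y \<in> U \<Longrightarrow> z \<in> U \<Longrightarrow> g z (x + y) = g z x + g z y"
  using g_sym[of z "x + y"] g_sym[of z x] g_sym[of z y] g_add_left[of x y z] U_closed by simp

lemma g_scale_right: "x \<in> U \<Longrightarrow> y \<in> U \<Longrightarrow> g y (a *\<^sub>R x) = a * g y x"
  using g_sym[of y "a *\<^sub>R x"] g_sym[of y x] g_scale_left[of x y a] U_closed by simp

lemma g_zero_left: "x \<in> U \<Longrightarrow> g 0 x = 0"
  and g_zero_right: "x \<in> U \<Longrightarrow> g x 0 = 0"
  using g_scale_left[of 0 x 0] g_scale_right[of 0 x 0] U_closed by simp_all

lemma g_minus_left: "x \<in> U \<Longrightarrow> y \<in> U \<Longrightarrow> g (- x) y = - g x y"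
  and g_minus_right: "x \<in> U \<Longrightarrow> y \<in> U \<Longrightarrow> g y (- x) = - g y x"
  using g_scale_left[of x y "-1"] g_scale_right[of x y "-1"] by simp_all

lemma g_diff_left: "x \<in> U \<Longrightarrow> y \<in> U \<Longrightarrow> z \<in> U \<Longrightarrow> g (x - y) z = g x z - g y z"
  using g_add_left[of x "- y" z] g_minus_left[of y z] U_closed by simp

lemma g_sum_scaleR_left:
  assumes "\<And>i. i \<in> I \<Longrightarrow> v i \<in> U" "y \<in> U"
  shows "g (\<Sum>i\<in>I. c i *\<^sub>R v i) y = (\<Sum>i\<in>I. c i * g (v i) y)"
proof (cases "finite I")
  case True
  with assms have "g (\<Sum>i\<in>I. c i *\<^sub>R v i) y = (\<Sum>i\<in>I. c i *\<^sub>R g (v i) y)"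
    by (intro additive_on_sum_scaleR[OF _ _ subspace, where f = "\<lambda>x. g x y"])
      (simp_all add: g_add_left g_scale_left)
  then show ?thesis by simp
qed (simp add: g_zero_left assms)

lemma g_sum_scaleR_right:
  assumes "\<And>i. i \<in> I \<Longrightarrow> v i \<in> U" "y \<in> U"
  shows "g y (\<Sum>i\<in>I. c i *\<^sub>R v i) = (\<Sum>i\<in>I. c i * g y (v i))"
proof -
  have "(\<Sum>i\<in>I. c i *\<^sub>R v i) \<in> U" using assms(1) by (rule U_sum)
  with assms(2) have "g y (\<Sum>i\<in>I. c i *\<^sub>R v i) = g (\<Sum>i\<in>I. c i *\<^sub>R v i) y"
    by (rule g_sym)
  also have "\<dots> = (\<Sum>i\<in>I. c i * g (v i) y)" using assms by (rule g_sum_scaleR_left)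
  also have "\<dots> = (\<Sum>i\<in>I. c i * g y (v i))" using assms g_sym by (intro sum.cong) auto
  finally show ?thesis .
qed

lemma eq_if_same_pairings:
  assumes "u \<in> U" "u' \<in> U" "\<And>w. w \<in> U \<Longrightarrow> g u w = g u' w"
  shows "u = u'"
  using g_nondegenerate[of "u - u'"] assms by (simp add: g_diff_left U_closed)

lemma eq_0_if_orthogonal_to_spanning:
  assumes "x \<in> U" "S \<subseteq> U" "U \<subseteq> span S" "\<And>s. s \<in> S \<Longrightarrow> g x s = 0"
  shows "x = 0"
proof (rule g_nondegenerate[OF assms(1)])
  fix u assume "u \<in> U"
  have "subspace {u \<in> U. g x u = 0}"
    unfolding subspace_def using assms(1) by (auto simp: U_closed g_zero_right g_add_right g_scale_right)
  with assms(2,4) have "span S \<subseteq> {u \<in> U. g x u = 0}"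
    by (intro span_minimal) auto
  with \<open>u \<in> U\<close> assms(3) show "g x u = 0" by blast
qed

definition dual_basis :: "'v set \<Rightarrow> ('v \<Rightarrow> 'v) \<Rightarrow> bool" where
  "dual_basis E d \<longleftrightarrow> finite E \<and> E \<subseteq> U \<and> span E = U \<and> (\<forall>e\<in>E. d e \<in> U) \<and>
     (\<forall>e\<in>E. \<forall>e'\<in>E. g e (d e') = (if e = e' then 1 else 0))"

lemma dual_basisD:
  assumes "dual_basis E d"
  shows "finite E" "E \<subseteq> U" "span E = U" "\<And>e. e \<in> E \<Longrightarrow> d e \<in> U"
    "\<And>e e'. e \<in> E \<Longrightarrow> e' \<in> E \<Longrightarrow> g e (d e') = (if e = e' then 1 else 0)"
  using assms unfolding dual_basis_def by auto

lemma dual_basis_sum_delta: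
  assumes D: "dual_basis E d" and e': "e' \<in> E"
  shows "(\<Sum>e\<in>E. c e * g e' (d e)) = c e'" "(\<Sum>e\<in>E. c e * g e (d e')) = c e'"
proof -
  note E = dual_basisD[OF D]
  have "(\<Sum>e\<in>E. c e * g e' (d e)) = (\<Sum>e\<in>E. if e = e' then c e else 0)"
    "(\<Sum>e\<in>E. c e * g e (d e')) = (\<Sum>e\<in>E. if e = e' then c e else 0)"
    using E(5) e' by (auto intro!: sum.cong)
  then show "(\<Sum>e\<in>E. c e * g e' (d e)) = c e'" "(\<Sum>e\<in>E. c e * g e (d e')) = c e'"
    using E(1) e' by simp_all
qed

lemma dual_basis_expand_dual:
  assumes D: "dual_basis E d" and v: "v \<in> U"
  shows "v = (\<Sum>e\<in>E. g v e *\<^sub>R d e)"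
proof -
  note E = dual_basisD[OF D]
  let ?w = "\<Sum>e\<in>E. g v e *\<^sub>R d e"
  have w: "?w \<in> U" using E(4) by (intro U_sum)
  have "v - ?w = 0"
  proof (rule eq_0_if_orthogonal_to_spanning[of _ E])
    show "v - ?w \<in> U" "E \<subseteq> U" "U \<subseteq> span E" using v w E(2,3) U_closed by auto
    fix s assume s: "s \<in> E"
    with E(2) have sU: "s \<in> U" by blast
    have "g ?w s = (\<Sum>e\<in>E. g v e * g s (d e))"
      using E(4) sU g_sym by (simp add: g_sum_scaleR_left)
    also have "\<dots> = g v s" by (rule dual_basis_sum_delta(1)[OF D s])
    finally show "g (v - ?w) s = 0" using g_diff_left v w sU by auto
  qed
  then show ?thesis by simp
qed

lemma dual_basis_expand:
  assumes D: "dual_basis E d" and v: "v \<in> U"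
  shows "v = (\<Sum>e\<in>E. g v (d e) *\<^sub>R e)"
proof -
  note E = dual_basisD[OF D]
  let ?w = "\<Sum>e\<in>E. g v (d e) *\<^sub>R e"
  have w: "?w \<in> U" using E(2) by (intro U_sum) blast
  have span_d: "U \<subseteq> span (d ` E)"
  proof
    fix u assume "u \<in> U"
    have "(\<Sum>e\<in>E. g u e *\<^sub>R d e) \<in> span (d ` E)"
      by (intro span_sum span_scale span_base) auto
    then show "u \<in> span (d ` E)" using dual_basis_expand_dual[OF D \<open>u \<in> U\<close>] by simp
  qed
  have "v - ?w = 0"
  proof (rule eq_0_if_orthogonal_to_spanning[OF _ _ span_d])
    show "v - ?w \<in> U" "d ` E \<subseteq> U" using v w E(4) U_closed by auto
    fix s assume "s \<in> d ` E"
    then obtain s' where s': "s' \<in> E" "s = d s'" by auto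
    have "g ?w (d s') = (\<Sum>e\<in>E. g v (d e) * g e (d s'))"
      using E(2,4) s' by (intro g_sum_scaleR_left) auto
    also have "\<dots> = g v (d s')" by (rule dual_basis_sum_delta(2)[OF D s'(1)])
    finally show "g (v - ?w) s = 0" using g_diff_left v w s' E(4) by auto
  qed
  then show ?thesis by simp
qed

lemma dual_basis_pairing:
  assumes D: "dual_basis E d" and u: "u \<in> U" and v: "v \<in> U"
  shows "(\<Sum>e\<in>E. g u e * g v (d e)) = g u v"
proof -
  note E = dual_basisD[OF D]
  have "g u v = g u (\<Sum>e\<in>E. g v (d e) *\<^sub>R e)" using dual_basis_expand[OF D v] by simp
  also have "\<dots> = (\<Sum>e\<in>E. g v (d e) * g u e)"
    using E(2) u by (intro g_sum_scaleR_right) auto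
  finally show ?thesis by (simp add: mult.commute)
qed

lemma subspace_basis_exists: "\<exists>B. B \<subseteq> U \<and> independent B \<and> span B = U"
proof -
  obtain B where "B \<subseteq> U" "independent B" "U \<subseteq> span B" by (rule basis_exists)
  moreover have "span B \<subseteq> U" using \<open>B \<subseteq> U\<close> subspace by (rule span_minimal)
  ultimately show ?thesis by blast
qed

lemma musical_map_linear_extension:
  assumes B: "independent B" "span B = U"
  obtains P where "linear P" "\<And>v. v \<in> U \<Longrightarrow> P v = (\<Sum>b\<in>B. g v b *\<^sub>R b)"
proof
  have fin: "finite B" using B(1) by (rule independent_imp_finite)
  define P where "P = construct B (\<lambda>b. \<Sum>b'\<in>B. g b b' *\<^sub>R b')"
  show linP: "linear P" unfolding P_def using B(1) by (rule linear_construct)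
  fix v assume v: "v \<in> U"
  have v_eq: "v = (\<Sum>b\<in>B. representation B v b *\<^sub>R b)"
    using sum_representation_eq[OF B(1) _ fin order_refl] v B(2) by simp
  have "P v = (\<Sum>b\<in>B. representation B v b *\<^sub>R P b)"
    by (subst v_eq) (simp add: linear_sum[OF linP] linear_scale[OF linP])
  also have "\<dots> = (\<Sum>b\<in>B. \<Sum>b'\<in>B. (representation B v b * g b b') *\<^sub>R b')"
    unfolding P_def using B(1) by (intro sum.cong) (auto simp: construct_basis scaleR_sum_right)
  also have "\<dots> = (\<Sum>b'\<in>B. (\<Sum>b\<in>B. representation B v b * g b b') *\<^sub>R b')"
    by (subst sum.swap) (simp add: scaleR_sum_left)
  also have "\<dots> = (\<Sum>b'\<in>B. g v b' *\<^sub>R b')"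
  proof (intro sum.cong refl)
    fix b' assume "b' \<in> B"
    with B have "g (\<Sum>b\<in>B. representation B v b *\<^sub>R b) b' = (\<Sum>b\<in>B. representation B v b * g b b')"
      by (intro g_sum_scaleR_left) (auto intro: span_base)
    then show "(\<Sum>b\<in>B. representation B v b * g b b') *\<^sub>R b' = g v b' *\<^sub>R b'"
      using v_eq by simp
  qed
  finally show "P v = (\<Sum>b\<in>B. g v b *\<^sub>R b)" .
qed

text \<open>The musical map v \<mapsto> \<Sum>b\<in>B. g v b b is injective by nondegeneracy, hence onto.\<close>

lemma musical_map_surjective:
  assumes B: "B \<subseteq> U" "independent B" "span B = U" and u: "u \<in> U"
  shows "\<exists>v\<in>U. (\<Sum>b\<in>B. g v b *\<^sub>R b) = u"
proof -
  have fin: "finite B" using B(2) by (rule independent_imp_finite)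
  obtain P where linP: "linear P" and P: "\<And>v. v \<in> U \<Longrightarrow> P v = (\<Sum>b\<in>B. g v b *\<^sub>R b)"
    using musical_map_linear_extension[OF B(2,3)] by blast
  have spanU: "span U = U" using subspace by (rule span_eq_iff[THEN iffD2])
  have "inj_on P (span U)"
  proof (rule inj_onI)
    fix x y assume xy: "x \<in> span U" "y \<in> span U" "P x = P y"
    then have xyU: "x - y \<in> U" using spanU U_closed by simp
    have "(\<Sum>b\<in>B. g (x - y) b *\<^sub>R b) = (\<Sum>b\<in>B. 0 *\<^sub>R b)"
      using P[OF xyU] xy(3) linear_diff[OF linP] by simp
    then have "\<And>b. b \<in> B \<Longrightarrow> g (x - y) b = 0"
      using sum_scaleR_coefficients_unique[OF B(2) fin, of "\<lambda>b. g (x - y) b" "\<lambda>_. 0"] by simp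
    then have "x - y = 0" using B xyU by (intro eq_0_if_orthogonal_to_spanning[of _ B]) auto
    then show "x = y" by simp
  qed
  then have "dim (P ` U) = dim U" using dim_image_eq[OF linP] by blast
  moreover have "P ` U \<subseteq> U"
    using P B(1) by (auto intro!: U_sum)
  moreover have "subspace (P ` U)" using linP subspace by (rule linear_subspace_image)
  ultimately have "P ` U = U" using subspace by (intro subspace_dim_equal) auto
  with u P show ?thesis by force
qed

lemma dual_basis_exists_for_basis:
  assumes B: "B \<subseteq> U" "independent B" "span B = U"
  shows "\<exists>d. dual_basis B d"
proof -
  have fin: "finite B" using B(2) by (rule independent_imp_finite)
  obtain d where d: "\<And>b. b \<in> B \<Longrightarrow> d b \<in> U \<and> (\<Sum>b'\<in>B. g (d b) b' *\<^sub>R b') = b"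
    using musical_map_surjective[OF B] B(1) by (metis subset_iff)
  have "g b (d b') = (if b = b' then 1 else 0)" if b: "b \<in> B" and b': "b' \<in> B" for b b'
  proof -
    have "(\<Sum>b''\<in>B. (if b'' = b' then 1 else 0) *\<^sub>R b'') = (\<Sum>b''\<in>B. if b'' = b' then b'' else 0)"
      by (intro sum.cong) auto
    then have "(\<Sum>b''\<in>B. (if b'' = b' then 1 else 0) *\<^sub>R b'') = b'"
      using fin b' by simp
    with d[OF b'] have "(\<Sum>b''\<in>B. g (d b') b'' *\<^sub>R b'') = (\<Sum>b''\<in>B. (if b'' = b' then 1 else 0) *\<^sub>R b'')"
      by simp
    from sum_scaleR_coefficients_unique[OF B(2) fin this b] show ?thesis
      using g_sym[of b "d b'"] d[OF b'] b B(1) by auto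
  qed
  then show ?thesis unfolding dual_basis_def using fin B d by blast
qed

lemma dual_basis_exists: "\<exists>E d. dual_basis E d"
  using subspace_basis_exists dual_basis_exists_for_basis by blast

lemma dual_basis_expand_functional:
  assumes D: "dual_basis E d" and u: "u \<in> U"
    and add: "\<And>x y. x \<in> U \<Longrightarrow> y \<in> U \<Longrightarrow> \<phi> (x + y) = \<phi> x + \<phi> y"
    and scale: "\<And>x a. x \<in> U \<Longrightarrow> \<phi> (a *\<^sub>R x) = a * \<phi> x"
  shows "\<phi> u = (\<Sum>e\<in>E. g u (d e) * \<phi> e)"
proof -
  note E = dual_basisD[OF D]
  have "\<phi> (\<Sum>e\<in>E. g u (d e) *\<^sub>R e) = (\<Sum>e\<in>E. g u (d e) *\<^sub>R \<phi> e)"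
    using E(1,2) scale by (intro additive_on_sum_scaleR[OF add _ subspace]) auto
  then show ?thesis using dual_basis_expand[OF D u] by simp
qed

lemma riesz_representation:
  assumes add: "\<And>x y. x \<in> U \<Longrightarrow> y \<in> U \<Longrightarrow> \<phi> (x + y) = \<phi> x + \<phi> y"
    and scale: "\<And>x a. x \<in> U \<Longrightarrow> \<phi> (a *\<^sub>R x) = a * \<phi> x"
  shows "\<exists>u\<in>U. \<forall>w\<in>U. g u w = \<phi> w"
proof -
  obtain E d where D: "dual_basis E d" using dual_basis_exists by blast
  note E = dual_basisD[OF D]
  let ?u = "\<Sum>e\<in>E. \<phi> e *\<^sub>R d e"
  have "g ?u w = \<phi> w" if "w \<in> U" for w
    using E(4) that g_sym dual_basis_expand_functional[OF D that add scale]
    by (simp add: g_sum_scaleR_left mult.commute)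
  moreover have "?u \<in> U" using E(4) by (intro U_sum)
  ultimately show ?thesis by blast
qed

definition endomorphism :: "('v \<Rightarrow> 'v) \<Rightarrow> bool" where
  "endomorphism f \<longleftrightarrow> (\<forall>x\<in>U. \<forall>y\<in>U. f (x + y) = f x + f y) \<and> (\<forall>x\<in>U. \<forall>a. f (a *\<^sub>R x) = a *\<^sub>R f x)
     \<and> (\<forall>x\<in>U. f x \<in> U)"

lemma endomorphism_sum_scaleR:
  assumes "endomorphism f" "finite I" "\<And>i. i \<in> I \<Longrightarrow> v i \<in> U"
  shows "f (\<Sum>i\<in>I. c i *\<^sub>R v i) = (\<Sum>i\<in>I. c i *\<^sub>R f (v i))"
  using assms additive_on_sum_scaleR[OF _ _ subspace, of f] unfolding endomorphism_def by blast

lemma endomorphism_in: "endomorphism f \<Longrightarrow> x \<in> U \<Longrightarrow> f x \<in> U"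
  unfolding endomorphism_def by blast

lemma endomorphism_expand:
  assumes D: "dual_basis E d" and f: "endomorphism f" and u: "u \<in> U" and v: "v \<in> U"
  shows "g (f u) v = (\<Sum>e\<in>E. g u (d e) * g (f e) v)"
proof -
  note E = dual_basisD[OF D]
  have "f (\<Sum>e\<in>E. g u (d e) *\<^sub>R e) = (\<Sum>e\<in>E. g u (d e) *\<^sub>R f e)"
    using E(2) by (intro endomorphism_sum_scaleR[OF f E(1)]) auto
  then have "f u = (\<Sum>e\<in>E. g u (d e) *\<^sub>R f e)"
    using dual_basis_expand[OF D u] by simp
  then show ?thesis
    using E(2) v endomorphism_in[OF f] by (simp add: g_sum_scaleR_left subset_iff)
qed

lemma ltrace_dual_basis:
  assumes D: "dual_basis E d" and f: "endomorphism f"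
  shows "ltrace U f = (\<Sum>e\<in>E. g (f e) (d e))"
proof -
  note E = dual_basisD[OF D]
  define B where "B = (SOME B. B \<subseteq> U \<and> independent B \<and> span B = U)"
  have B: "B \<subseteq> U" "independent B" "span B = U"
    unfolding B_def using someI_ex[OF subspace_basis_exists] by blast+
  obtain dB where DB: "dual_basis B dB" using dual_basis_exists_for_basis[OF B] by blast
  note BB = dual_basisD[OF DB]
  have representation: "representation B v b = g v (dB b)" if v: "v \<in> U" and b: "b \<in> B" for v b
  proof -
    have "(\<Sum>b\<in>B. representation B v b *\<^sub>R b) = (\<Sum>b\<in>B. g v (dB b) *\<^sub>R b)"
      using sum_representation_eq[OF B(2) _ BB(1) order_refl] dual_basis_expand[OF DB v] v B(3)
      by simp
    from sum_scaleR_coefficients_unique[OF B(2) BB(1) this b] show ?thesis .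
  qed
  have "ltrace U f = (\<Sum>b\<in>B. g (f b) (dB b))"
    unfolding ltrace_def Let_def B_def[symmetric]
    using B(1) endomorphism_in[OF f] by (intro sum.cong) (auto simp: representation)
  also have "\<dots> = (\<Sum>b\<in>B. \<Sum>e\<in>E. g b (d e) * g (f e) (dB b))"
    using B(1) BB(4) by (intro sum.cong endomorphism_expand[OF D f]) auto
  also have "\<dots> = (\<Sum>e\<in>E. \<Sum>b\<in>B. g (d e) b * g (f e) (dB b))"
    using B(1) E(4) by (subst sum.swap) (intro sum.cong refl; simp add: g_sym subset_iff)
  also have "\<dots> = (\<Sum>e\<in>E. g (f e) (d e))"
    using E(2,4) endomorphism_in[OF f]
    by (intro sum.cong refl) (simp add: dual_basis_pairing[OF DB] g_sym subset_iff)
  finally show ?thesis .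
qed

lemma dual_basis_trace_swap:
  assumes D: "dual_basis E d" and f: "endomorphism f"
  shows "(\<Sum>e\<in>E. g (f (d e)) e) = (\<Sum>e\<in>E. g (f e) (d e))"
proof -
  note E = dual_basisD[OF D]
  have "(\<Sum>e\<in>E. g (f (d e)) e) = (\<Sum>e\<in>E. \<Sum>e'\<in>E. g (d e) (d e') * g (f e') e)"
    using E(2,4) by (intro sum.cong endomorphism_expand[OF D f]) auto
  also have "\<dots> = (\<Sum>e'\<in>E. \<Sum>e\<in>E. g (f e') e * g (d e') (d e))"
    using E(4) by (subst sum.swap) (intro sum.cong refl; simp add: g_sym)
  also have "\<dots> = (\<Sum>e'\<in>E. g (f e') (d e'))"
    using E(2,4) endomorphism_in[OF f] by (intro sum.cong refl) (simp add: dual_basis_pairing[OF D] subset_iff)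
  finally show ?thesis .
qed

end

section \<open>Levi-Civita connection and Ricci tensor of a metric Lie algebra\<close>

locale metric_lie = metric_subspace U g for U :: "'v::euclidean_space set" and g +
  fixes br :: "'v \<Rightarrow> 'v \<Rightarrow> 'v"
  assumes lie: "lie_algebra U br"
begin

lemma br_closed: "x \<in> U \<Longrightarrow> y \<in> U \<Longrightarrow> br x y \<in> U"
  and br_add_left: "x \<in> U \<Longrightarrow> y \<in> U \<Longrightarrow> z \<in> U \<Longrightarrow> br (x + y) z = br x z + br y z"
  and br_add_right: "x \<in> U \<Longrightarrow> y \<in> U \<Longrightarrow> z \<in> U \<Longrightarrow> br z (x + y) = br z x + br z y"
  and br_scale_left: "x \<in> U \<Longrightarrow> y \<in> U \<Longrightarrow> br (a *\<^sub>R x) y = a *\<^sub>R br x y"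
  and br_scale_right: "x \<in> U \<Longrightarrow> y \<in> U \<Longrightarrow> br y (a *\<^sub>R x) = a *\<^sub>R br y x"
  and br_self: "x \<in> U \<Longrightarrow> br x x = 0"
  and jacobi: "x \<in> U \<Longrightarrow> y \<in> U \<Longrightarrow> z \<in> U \<Longrightarrow> br x (br y z) + br y (br z x) + br z (br x y) = 0"
  using lie unfolding lie_algebra_def by blast+

lemma br_antisym: "x \<in> U \<Longrightarrow> y \<in> U \<Longrightarrow> br x y = - br y x"
  using br_self[of "x + y"] br_self[of x] br_self[of y]
  by (simp add: br_add_left br_add_right U_closed eq_neg_iff_add_eq_0 add.commute)

lemma br_zero_right: "x \<in> U \<Longrightarrow> br x 0 = 0"
  using br_scale_right[of 0 x 0] U_closed by simp

lemma br_minus_right: "x \<in> U \<Longrightarrow> y \<in> U \<Longrightarrow> br y (- x) = - br y x"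
  using br_scale_right[of x y "-1"] by simp

lemma ad_endomorphism: "x \<in> U \<Longrightarrow> endomorphism (ad br x)"
  unfolding endomorphism_def ad_def by (simp add: br_add_right br_scale_right br_closed)

definition koszul :: "'v \<Rightarrow> 'v \<Rightarrow> 'v \<Rightarrow> real" where
  "koszul X Y W = g (br X Y) W - g (br Y W) X + g (br W X) Y"

lemma koszul_add:
  "X \<in> U \<Longrightarrow> X' \<in> U \<Longrightarrow> Y \<in> U \<Longrightarrow> W \<in> U \<Longrightarrow> koszul (X + X') Y W = koszul X Y W + koszul X' Y W"
  "X \<in> U \<Longrightarrow> Y \<in> U \<Longrightarrow> Y' \<in> U \<Longrightarrow> W \<in> U \<Longrightarrow> koszul X (Y + Y') W = koszul X Y W + koszul X Y' W"
  "X \<in> U \<Longrightarrow> Y \<in> U \<Longrightarrow> W \<in> U \<Longrightarrow> W' \<in> U \<Longrightarrow> koszul X Y (W + W') = koszul X Y W + koszul X Y W'"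
  by (simp_all add: koszul_def br_closed U_closed g_add_left g_add_right br_add_left br_add_right)

lemma koszul_scale:
  "X \<in> U \<Longrightarrow> Y \<in> U \<Longrightarrow> W \<in> U \<Longrightarrow> koszul (a *\<^sub>R X) Y W = a * koszul X Y W"
  "X \<in> U \<Longrightarrow> Y \<in> U \<Longrightarrow> W \<in> U \<Longrightarrow> koszul X (a *\<^sub>R Y) W = a * koszul X Y W"
  "X \<in> U \<Longrightarrow> Y \<in> U \<Longrightarrow> W \<in> U \<Longrightarrow> koszul X Y (a *\<^sub>R W) = a * koszul X Y W"
  by (simp_all add: koszul_def br_closed U_closed g_scale_left g_scale_right br_scale_left
      br_scale_right algebra_simps)

abbreviation nabla where "nabla \<equiv> levi_civita U br g"

lemma nabla_in_and_koszul:
  assumes X: "X \<in> U" and Y: "Y \<in> U"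
  shows "nabla X Y \<in> U \<and> (\<forall>W\<in>U. 2 * g (nabla X Y) W = koszul X Y W)"
proof -
  obtain u where u: "u \<in> U" "\<And>W. W \<in> U \<Longrightarrow> g u W = koszul X Y W / 2"
    using riesz_representation[of "\<lambda>W. koszul X Y W / 2"] X Y
    by (auto simp: koszul_add koszul_scale add_divide_distrib)
  have "nabla X Y = u"
    unfolding levi_civita_def
  proof (rule the_equality)
    have "2 * g u W = koszul X Y W" if "W \<in> U" for W
      using u(2)[OF that] by simp
    with u(1) show "u \<in> U \<and> (\<forall>W\<in>U. 2 * g u W = g (br X Y) W - g (br Y W) X + g (br W X) Y)"
      unfolding koszul_def by blast
    fix z assume z: "z \<in> U \<and> (\<forall>W\<in>U. 2 * g z W = g (br X Y) W - g (br Y W) X + g (br W X) Y)"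
    show "z = u"
    proof (rule eq_if_same_pairings)
      fix W assume "W \<in> U"
      with z u(2)[of W] show "g z W = g u W" unfolding koszul_def by auto
    qed (use z u in auto)
  qed
  then show ?thesis using u by (simp add: mult.commute)
qed

lemma nabla_in: "X \<in> U \<Longrightarrow> Y \<in> U \<Longrightarrow> nabla X Y \<in> U"
  and nabla_koszul: "X \<in> U \<Longrightarrow> Y \<in> U \<Longrightarrow> W \<in> U \<Longrightarrow> g (nabla X Y) W = koszul X Y W / 2"
  using nabla_in_and_koszul by fastforce+

lemma nabla_eqI:
  assumes "X \<in> U" "Y \<in> U" "Z \<in> U" "\<And>W. W \<in> U \<Longrightarrow> 2 * g Z W = koszul X Y W"
  shows "nabla X Y = Z"
proof (rule eq_if_same_pairings)
  fix W assume "W \<in> U"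
  then show "g (nabla X Y) W = g Z W" using assms(4)[of W] nabla_koszul[OF assms(1,2)] by fastforce
qed (use assms nabla_in in auto)

lemma nabla_add:
  "X \<in> U \<Longrightarrow> X' \<in> U \<Longrightarrow> Y \<in> U \<Longrightarrow> nabla (X + X') Y = nabla X Y + nabla X' Y"
  "X \<in> U \<Longrightarrow> Y \<in> U \<Longrightarrow> Y' \<in> U \<Longrightarrow> nabla X (Y + Y') = nabla X Y + nabla X Y'"
  by (rule nabla_eqI; simp add: U_closed nabla_in g_add_left nabla_koszul koszul_add)+

lemma nabla_scale:
  "X \<in> U \<Longrightarrow> Y \<in> U \<Longrightarrow> nabla (a *\<^sub>R X) Y = a *\<^sub>R nabla X Y"
  "X \<in> U \<Longrightarrow> Y \<in> U \<Longrightarrow> nabla X (a *\<^sub>R Y) = a *\<^sub>R nabla X Y"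
  by (rule nabla_eqI; simp add: U_closed nabla_in g_scale_left nabla_koszul koszul_scale)+

abbreviation curv where "curv \<equiv> curvature U br g"

lemma curvature_endomorphism: "Y \<in> U \<Longrightarrow> Z \<in> U \<Longrightarrow> endomorphism (\<lambda>X. curv X Y Z)"
  unfolding endomorphism_def curvature_def
  by (auto simp: nabla_in br_closed U_closed nabla_add nabla_scale br_add_left br_scale_left
      algebra_simps)

lemma curvature_in: "X \<in> U \<Longrightarrow> Y \<in> U \<Longrightarrow> Z \<in> U \<Longrightarrow> curv X Y Z \<in> U"
  by (simp add: curvature_def nabla_in br_closed U_closed)

lemma curvature_add_right:
  "X \<in> U \<Longrightarrow> Y \<in> U \<Longrightarrow> Z \<in> U \<Longrightarrow> Z' \<in> U \<Longrightarrow> curv X Y (Z + Z') = curv X Y Z + curv X Y Z'"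
  by (simp add: curvature_def nabla_in br_closed nabla_add)

lemma curvature_scale_right:
  "X \<in> U \<Longrightarrow> Y \<in> U \<Longrightarrow> Z \<in> U \<Longrightarrow> curv X Y (a *\<^sub>R Z) = a *\<^sub>R curv X Y Z"
  by (simp add: curvature_def nabla_in br_closed nabla_scale scaleR_diff_right)

lemma ricci_tensor_dual_basis:
  assumes "dual_basis E d" "Y \<in> U" "Z \<in> U"
  shows "ricci_tensor U br g Y Z = (\<Sum>e\<in>E. g (curv e Y Z) (d e))"
  unfolding ricci_tensor_def by (rule ltrace_dual_basis[OF assms(1) curvature_endomorphism[OF assms(2,3)]])

lemma ricci_tensor_linear:
  assumes "Y \<in> U" "Z \<in> U" "Z' \<in> U"
  shows "ricci_tensor U br g Y (Z + Z') = ricci_tensor U br g Y Z + ricci_tensor U br g Y Z'"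
    "ricci_tensor U br g Y (a *\<^sub>R Z) = a * ricci_tensor U br g Y Z"
proof -
  obtain E d where D: "dual_basis E d" using dual_basis_exists by blast
  note E = dual_basisD[OF D]
  have "e \<in> E \<Longrightarrow> e \<in> U" for e using E(2) by blast
  then show "ricci_tensor U br g Y (Z + Z') = ricci_tensor U br g Y Z + ricci_tensor U br g Y Z'"
    "ricci_tensor U br g Y (a *\<^sub>R Z) = a * ricci_tensor U br g Y Z"
    using assms E(4)
    by (simp_all add: ricci_tensor_dual_basis[OF D] U_closed curvature_add_right curvature_scale_right
        curvature_in g_add_left g_scale_left sum.distrib sum_distrib_left)
qed

lemma ricci_op_in_and_pairing:
  assumes Y: "Y \<in> U"
  shows "ricci_op U br g Y \<in> U \<and> (\<forall>Z\<in>U. g (ricci_op U br g Y) Z = ricci_tensor U br g Y Z)"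
proof -
  obtain u where u: "u \<in> U" "\<And>Z. Z \<in> U \<Longrightarrow> g u Z = ricci_tensor U br g Y Z"
    using riesz_representation[of "ricci_tensor U br g Y"] ricci_tensor_linear[OF Y] by blast
  have "ricci_op U br g Y = u"
    unfolding ricci_op_def using u by (intro the_equality) (auto intro: eq_if_same_pairings)
  then show ?thesis using u by simp
qed

lemma ricci_op_eqI:
  assumes "Y \<in> U" "R \<in> U" "\<And>Z. Z \<in> U \<Longrightarrow> g R Z = ricci_tensor U br g Y Z"
  shows "ricci_op U br g Y = R"
  using assms ricci_op_in_and_pairing[OF assms(1)] by (intro eq_if_same_pairings) auto

abbreviation adj where "adj W \<equiv> metric_adjoint U g (ad br W)"

lemma adj_in_and_pairing:
  assumes W: "W \<in> U" and y: "y \<in> U"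
  shows "adj W y \<in> U \<and> (\<forall>u\<in>U. g (adj W y) u = g y (br W u))"
proof -
  obtain u where u: "u \<in> U" "\<And>w. w \<in> U \<Longrightarrow> g u w = g y (br W w)"
    using riesz_representation[of "\<lambda>w. g y (br W w)"] W y
    by (auto simp: br_closed U_closed g_add_right g_scale_right br_add_right br_scale_right)
  have "adj W y = u"
    unfolding metric_adjoint_def ad_def using u by (intro the_equality) (auto intro: eq_if_same_pairings)
  then show ?thesis using u by simp
qed

lemma adj_in: "W \<in> U \<Longrightarrow> y \<in> U \<Longrightarrow> adj W y \<in> U"
  and adj_pairing: "W \<in> U \<Longrightarrow> y \<in> U \<Longrightarrow> u \<in> U \<Longrightarrow> g (adj W y) u = g y (br W u)"
  using adj_in_and_pairing by blast+

lemma adj_eqI: "W \<in> U \<Longrightarrow> y \<in> U \<Longrightarrow> z \<in> U \<Longrightarrow> (\<And>u. u \<in> U \<Longrightarrow> g z u = g y (br W u)) \<Longrightarrow> adj W y = z"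
  by (intro eq_if_same_pairings) (auto simp: adj_in adj_pairing)

lemma adj_add:
  "W \<in> U \<Longrightarrow> W' \<in> U \<Longrightarrow> y \<in> U \<Longrightarrow> adj (W + W') y = adj W y + adj W' y"
  "W \<in> U \<Longrightarrow> y \<in> U \<Longrightarrow> y' \<in> U \<Longrightarrow> adj W (y + y') = adj W y + adj W y'"
  by (rule adj_eqI; simp add: U_closed adj_in g_add_left g_add_right adj_pairing br_add_left br_closed)+

lemma adj_minus: "W \<in> U \<Longrightarrow> y \<in> U \<Longrightarrow> adj W (- y) = - adj W y"
  by (rule adj_eqI) (auto simp: U_closed adj_in g_minus_left adj_pairing br_closed)

lemma g_br_adj: "X \<in> U \<Longrightarrow> Y \<in> U \<Longrightarrow> Z \<in> U \<Longrightarrow> g (br X Y) Z = g Y (adj X Z)"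
  using adj_pairing[of X Z Y] g_sym[of "br X Y" Z] g_sym[of Y "adj X Z"] by (simp add: br_closed adj_in)

lemma g_br_adj_right: "X \<in> U \<Longrightarrow> Y \<in> U \<Longrightarrow> Z \<in> U \<Longrightarrow> g (br Y X) Z = - g Y (adj X Z)"
  using g_br_adj[of X Y Z] br_antisym[of Y X] by (simp add: g_minus_left br_closed)

lemma normal_polarized:
  assumes W: "W \<in> U" and W': "W' \<in> U" and y: "y \<in> U"
    and "normal_op U g (ad br W)" "normal_op U g (ad br W')" "normal_op U g (ad br (W + W'))"
  shows "br W (adj W' y) + br W' (adj W y) = adj W' (br W y) + adj W (br W' y)"
proof -
  have normal: "br V (adj V y) = adj V (br V y)" if "normal_op U g (ad br V)" for V
    using that y unfolding normal_op_def ad_def by simp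
  from normal[OF assms(6)] show ?thesis
    using W W' y normal[OF assms(4)] normal[OF assms(5)]
    by (simp add: adj_add br_add_left br_add_right adj_in br_closed U_closed algebra_simps)
qed

end

section \<open>The orthogonal splitting along a standard decomposition\<close>

lemma metric_on_restrict:
  assumes "metric_on G g" "S \<subseteq> G" "\<forall>x\<in>S. (\<forall>y\<in>S. g x y = 0) \<longrightarrow> x = 0"
  shows "metric_on S g"
  using assms unfolding metric_on_def by (simp add: subset_iff)

lemma lie_algebra_subalgebra:
  assumes "lie_algebra G br" "subalgebra S G br"
  shows "lie_algebra S br"
  using assms unfolding lie_algebra_def subalgebra_def by (simp add: subset_iff)

locale standard_split =
  fixes G N A B :: "'v::euclidean_space set" and br :: "'v \<Rightarrow> 'v \<Rightarrow> 'v" and g :: "'v \<Rightarrow> 'v \<Rightarrow> real"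
  assumes metric_lie_algebra: "metric_lie_algebra G br g"
    and ideal: "lie_ideal N G br" and abelian: "abelian_subalgebra A G br"
    and G_eq: "G = {n + a | n a. n \<in> N \<and> a \<in> A}"
    and orthogonal_N_A: "\<forall>n\<in>N. \<forall>a\<in>A. g n a = 0"
    and subspace_B: "subspace B" and B_subset_A: "B \<subseteq> A"
    and nondegenerate_B: "\<forall>x\<in>B. (\<forall>y\<in>B. g x y = 0) \<longrightarrow> x = 0"
begin

sublocale G: metric_lie G g br
  using metric_lie_algebra unfolding metric_lie_algebra_def
  by unfold_locales (auto simp: lie_algebra_def)

definition L where "L = {n + b | n b. n \<in> N \<and> b \<in> B}"
definition C where "C = {a \<in> A. \<forall>b\<in>B. g a b = 0}"

lemma subspace_N: "subspace N" and N_subset_G: "N \<subseteq> G" and br_N: "x \<in> G \<Longrightarrow> y \<in> N \<Longrightarrow> br x y \<in> N"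
  using ideal unfolding lie_ideal_def by auto

lemma subspace_A: "subspace A" and A_subset_G: "A \<subseteq> G" and br_A_A: "a \<in> A \<Longrightarrow> a' \<in> A \<Longrightarrow> br a a' = 0"
  using abelian unfolding abelian_subalgebra_def by auto

lemma in_G [simp]: "x \<in> N \<Longrightarrow> x \<in> G" "x \<in> A \<Longrightarrow> x \<in> G" "x \<in> B \<Longrightarrow> x \<in> G"
  using N_subset_G A_subset_G B_subset_A by auto

lemma g_N_A: "n \<in> N \<Longrightarrow> a \<in> A \<Longrightarrow> g n a = 0"
  and g_A_N: "n \<in> N \<Longrightarrow> a \<in> A \<Longrightarrow> g a n = 0"
  using orthogonal_N_A N_subset_G A_subset_G G.g_sym[of a n] by auto

lemma decompose_N_A:
  assumes "x \<in> G" obtains n a where "n \<in> N" "a \<in> A" "x = n + a"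
  using assms G_eq by blast

lemma N_nondegenerate: "n \<in> N \<Longrightarrow> (\<And>n'. n' \<in> N \<Longrightarrow> g n n' = 0) \<Longrightarrow> n = 0"
  and A_nondegenerate: "a \<in> A \<Longrightarrow> (\<And>a'. a' \<in> A \<Longrightarrow> g a a' = 0) \<Longrightarrow> a = 0"
  using N_subset_G A_subset_G
  by (auto intro!: G.g_nondegenerate elim!: decompose_N_A simp: G.g_add_right g_N_A g_A_N subset_iff)

lemma in_N_if_orthogonal_A:
  assumes x: "x \<in> G" and orth: "\<And>a. a \<in> A \<Longrightarrow> g x a = 0"
  shows "x \<in> N"
proof -
  obtain n a where na: "n \<in> N" "a \<in> A" "x = n + a" using decompose_N_A[OF x] .
  have "a = 0"
  proof (rule A_nondegenerate[OF na(2)])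
    fix a' assume "a' \<in> A"
    then show "g a a' = 0"
      using orth[of a'] na N_subset_G A_subset_G by (auto simp: G.g_add_left g_N_A)
  qed
  with na show ?thesis by simp
qed

lemma br_in_N:
  assumes x: "x \<in> G" and y: "y \<in> G"
  shows "br x y \<in> N"
proof -
  obtain n a where na: "n \<in> N" "a \<in> A" "x = n + a" using decompose_N_A[OF x] .
  obtain n' a' where na': "n' \<in> N" "a' \<in> A" "y = n' + a'" using decompose_N_A[OF y] .
  have "br x y = br n y + (br a n' + br a a')"
    using na na' y by (simp add: G.br_add_left G.br_add_right)
  also have "\<dots> = br a n' - br y n"
    using na na' y br_A_A[of a a'] G.br_antisym[of n y] by simp
  finally show ?thesis
    using na na' y br_N subspace_N by (simp add: subspace_diff)
qed

lemma subspace_L: "subspace L"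
  unfolding L_def using subspace_N subspace_B by (rule subspace_sums)

lemma N_subset_L: "N \<subseteq> L" and B_subset_L: "B \<subseteq> L"
  unfolding L_def using subspace_0[OF subspace_B] subspace_0[OF subspace_N] by force+

lemma L_subset_G: "L \<subseteq> G"
  unfolding L_def using N_subset_G B_subset_A A_subset_G by (auto intro: G.U_closed)

lemma subalgebra_L: "subalgebra L G br"
  unfolding subalgebra_def using subspace_L L_subset_G br_in_N N_subset_L by blast

lemma subspace_C: "subspace C"
  unfolding C_def subspace_def using subspace_A A_subset_G B_subset_A
  by (auto simp: subspace_0 subspace_add subspace_scale G.g_zero_left G.g_add_left G.g_scale_left
      subset_iff)

lemma C_subset_A: "C \<subseteq> A"
  unfolding C_def by auto

lemma L_C_in_G [simp]: "x \<in> L \<Longrightarrow> x \<in> G" "x \<in> C \<Longrightarrow> x \<in> G"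
  using L_subset_G C_subset_A by auto

lemma g_L_C: "l \<in> L \<Longrightarrow> c \<in> C \<Longrightarrow> g l c = 0"
  and g_C_L: "l \<in> L \<Longrightarrow> c \<in> C \<Longrightarrow> g c l = 0"
  unfolding L_def C_def using B_subset_A
  by (auto simp: G.g_add_left G.g_add_right g_N_A g_A_N G.g_sym[of _ c] subset_iff)

lemma in_C_if_orthogonal_L:
  assumes x: "x \<in> G" and orth: "\<And>l. l \<in> L \<Longrightarrow> g x l = 0"
  shows "x \<in> C"
proof -
  obtain n a where na: "n \<in> N" "a \<in> A" "x = n + a" using decompose_N_A[OF x] .
  have "n = 0"
  proof (rule N_nondegenerate[OF na(1)])
    fix n' assume "n' \<in> N"
    then show "g n n' = 0"
      using orth[of n'] na N_subset_L by (auto simp: G.g_add_left g_A_N)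
  qed
  then show ?thesis unfolding C_def using na orth B_subset_L by auto
qed

lemma decompose_L_C:
  assumes x: "x \<in> G" obtains l c where "l \<in> L" "c \<in> C" "x = l + c"
proof -
  obtain n a where na: "n \<in> N" "a \<in> A" "x = n + a" using decompose_N_A[OF x] .
  interpret B: metric_subspace B g
    using subspace_B metric_on_restrict[of G g B] G.metric nondegenerate_B
    by unfold_locales (auto simp: subset_iff)
  obtain b where b: "b \<in> B" "\<And>w. w \<in> B \<Longrightarrow> g b w = g a w"
    using B.riesz_representation[of "g a"] na by (auto simp: G.g_add_right G.g_scale_right)
  have "n + b \<in> L" unfolding L_def using na b by blast
  moreover have "a - b \<in> C"
    unfolding C_def using na b subspace_A B_subset_A by (auto simp: subspace_diff G.g_diff_left)
  moreover have "x = (n + b) + (a - b)" using na by simp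
  ultimately show ?thesis using that by blast
qed

lemma eq_0_if_orthogonal_L_C:
  assumes "x \<in> G" "\<And>l. l \<in> L \<Longrightarrow> g x l = 0" "\<And>c. c \<in> C \<Longrightarrow> g x c = 0"
  shows "x = 0"
proof (rule G.g_nondegenerate[OF assms(1)])
  fix y assume "y \<in> G"
  then obtain l c where "l \<in> L" "c \<in> C" "y = l + c" by (rule decompose_L_C)
  then show "g x y = 0" using assms by (simp add: G.g_add_right)
qed

sublocale L: metric_lie L g br
proof unfold_locales
  show "subspace L" by (rule subspace_L)
  show "lie_algebra L br"
    using G.lie subalgebra_L by (rule lie_algebra_subalgebra)
  show "metric_on L g"
    using metric_on_restrict[OF G.metric L_subset_G] eq_0_if_orthogonal_L_C g_L_C by simp
qed

sublocale C: metric_subspace C g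
proof unfold_locales
  show "subspace C" by (rule subspace_C)
  have "C \<subseteq> G" by auto
  then show "metric_on C g"
    using metric_on_restrict[OF G.metric] eq_0_if_orthogonal_L_C g_C_L by simp
qed

lemma br_A_commute:
  assumes "w \<in> A" "W \<in> A" "x \<in> G"
  shows "br w (br W x) = br W (br w x)"
  using G.jacobi[of w W x] assms br_A_A[of w W] G.br_antisym[of x w]
  by (simp add: G.br_zero_right G.br_minus_right G.br_closed)

lemma adj_A_in_N: "W \<in> A \<Longrightarrow> y \<in> G \<Longrightarrow> G.adj W y \<in> N"
  by (rule in_N_if_orthogonal_A) (auto simp: G.adj_in G.adj_pairing br_A_A G.g_zero_right)

lemma ad_endomorphism_L: "W \<in> G \<Longrightarrow> L.endomorphism (ad br W)"
  unfolding L.endomorphism_def ad_def using br_in_N N_subset_L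
  by (auto simp: G.br_add_right G.br_scale_right)

lemma dual_basis_union:
  assumes D1: "L.dual_basis E1 d1" and D2: "C.dual_basis E2 d2"
  shows "E1 \<inter> E2 = {}" "G.dual_basis (E1 \<union> E2) (\<lambda>e. if e \<in> E1 then d1 e else d2 e)"
proof -
  note E1 = L.dual_basisD[OF D1] and E2 = C.dual_basisD[OF D2]
  show disj: "E1 \<inter> E2 = {}"
  proof (rule ccontr)
    assume "E1 \<inter> E2 \<noteq> {}"
    then obtain e where "e \<in> E1" "e \<in> E2" by blast
    then show False using E2(5)[of e e] g_L_C[of e "d2 e"] E1(2) E2(4) by auto
  qed
  have "G \<subseteq> span (E1 \<union> E2)"
  proof
    fix x assume "x \<in> G"
    then obtain l c where lc: "l \<in> L" "c \<in> C" "x = l + c" by (rule decompose_L_C)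
    then have "l \<in> span (E1 \<union> E2)" "c \<in> span (E1 \<union> E2)"
      using E1(3) E2(3) span_mono[of E1 "E1 \<union> E2"] span_mono[of E2 "E1 \<union> E2"] by auto
    with lc show "x \<in> span (E1 \<union> E2)" by (simp add: span_add)
  qed
  moreover have "E1 \<union> E2 \<subseteq> G" using E1(2) E2(2) by auto
  then have "span (E1 \<union> E2) \<subseteq> G" using G.subspace by (rule span_minimal)
  moreover have "g e (if e' \<in> E1 then d1 e' else d2 e') = (if e = e' then 1 else 0)"
    if "e \<in> E1 \<union> E2" "e' \<in> E1 \<union> E2" for e e'
    using that disj E1(2,4,5) E2(2,4,5) by (auto simp: g_L_C g_C_L subset_iff)
  ultimately show "G.dual_basis (E1 \<union> E2) (\<lambda>e. if e \<in> E1 then d1 e else d2 e)"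
    unfolding G.dual_basis_def using E1(1,4) E2(1,4) span_superset[of "E1 \<union> E2"] by auto
qed

lemma ltrace_L_ad_A:
  assumes c: "c \<in> A"
  shows "ltrace L (ad br c) = ltrace G (ad br c)"
proof -
  obtain E1 d1 where D1: "L.dual_basis E1 d1" using L.dual_basis_exists by blast
  obtain E2 d2 where D2: "C.dual_basis E2 d2" using C.dual_basis_exists by blast
  note E1 = L.dual_basisD[OF D1] and E2 = C.dual_basisD[OF D2]
  have "ltrace G (ad br c) = (\<Sum>e\<in>E1. g (ad br c e) (d1 e)) + (\<Sum>e\<in>E2. g (ad br c e) (d2 e))"
    using G.ltrace_dual_basis[OF dual_basis_union(2)[OF D1 D2] G.ad_endomorphism] c
      sum_union_disjoint_cases[OF E1(1) E2(1) dual_basis_union(1)[OF D1 D2]] by simp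
  also have "(\<Sum>e\<in>E2. g (ad br c e) (d2 e)) = 0"
    using c E2(2,4) C_subset_A br_A_A by (auto simp: ad_def G.g_zero_left subset_iff)
  finally show ?thesis
    using L.ltrace_dual_basis[OF D1 ad_endomorphism_L] c by simp
qed

section \<open>Comparison of the Ricci tensors\<close>

definition sff :: "'v \<Rightarrow> 'v \<Rightarrow> 'v" where
  "sff X Y = G.nabla X Y - L.nabla X Y"

lemma g_nabla_L: "X \<in> L \<Longrightarrow> Y \<in> L \<Longrightarrow> V \<in> L \<Longrightarrow> g (G.nabla X Y) V = g (L.nabla X Y) V"
  by (simp add: G.nabla_koszul L.nabla_koszul G.koszul_def L.koszul_def)

lemma sff_in_C: "X \<in> L \<Longrightarrow> Y \<in> L \<Longrightarrow> sff X Y \<in> C"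
  unfolding sff_def
  by (rule in_C_if_orthogonal_L) (simp_all add: G.nabla_in L.nabla_in G.U_closed G.g_diff_left g_nabla_L)

lemma g_sff:
  assumes "X \<in> L" "Z \<in> L" "W \<in> C"
  shows "g (sff X Z) W = (g (br W X) Z - g (br Z W) X) / 2"
  using assms g_L_C[of "L.nabla X Z" W] g_N_A[OF br_in_N[of X Z], of W] C_subset_A
  by (auto simp: sff_def G.g_diff_left G.nabla_in L.nabla_in G.nabla_koszul G.koszul_def)

lemma g_nabla_sff:
  assumes X: "X \<in> L" and Y: "Y \<in> L" and Z: "Z \<in> L" and V: "V \<in> L"
  shows "g (G.nabla X (G.nabla Y Z)) V
    = g (L.nabla X (L.nabla Y Z)) V + (g (br X (sff Y Z)) V - g (br (sff Y Z) V) X) / 2"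
proof -
  have "G.nabla Y Z = L.nabla Y Z + sff Y Z" by (simp add: sff_def)
  then have "g (G.nabla X (G.nabla Y Z)) V = g (G.nabla X (L.nabla Y Z)) V + g (G.nabla X (sff Y Z)) V"
    using X Y Z V sff_in_C[OF Y Z] by (simp add: L.nabla_in G.nabla_add G.nabla_in G.g_add_left)
  moreover have "g (G.nabla X (L.nabla Y Z)) V = g (L.nabla X (L.nabla Y Z)) V"
    using X Y Z V by (simp add: L.nabla_in g_nabla_L)
  moreover have "g (br V X) (sff Y Z) = 0"
    using g_N_A[OF br_in_N[of V X]] sff_in_C[OF Y Z] X V C_subset_A by auto
  then have "g (G.nabla X (sff Y Z)) V = (g (br X (sff Y Z)) V - g (br (sff Y Z) V) X) / 2"
    using X V sff_in_C[OF Y Z] by (simp add: G.nabla_koszul G.koszul_def)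
  ultimately show ?thesis by simp
qed

lemma gauss_equation:
  assumes X: "X \<in> L" and Y: "Y \<in> L" and Z: "Z \<in> L" and V: "V \<in> L"
  shows "g (G.curv X Y Z) V = g (L.curv X Y Z) V
    + (g (br X (sff Y Z)) V - g (br (sff Y Z) V) X) / 2
    - (g (br Y (sff X Z)) V - g (br (sff X Z) V) Y) / 2"
  using assms g_nabla_sff[OF X Y Z V] g_nabla_sff[OF Y X Z V] g_nabla_L[OF L.br_closed[OF X Y] Z V]
  by (simp add: curvature_def G.g_diff_left G.nabla_in L.nabla_in G.br_closed L.br_closed G.U_closed
      L.U_closed)

lemma sum_koszul_dual_basis:
  assumes D1: "L.dual_basis E1 d1" and W: "W \<in> G" and Z: "Z \<in> L" and v: "v \<in> L"
  shows "(\<Sum>e\<in>E1. g v (d1 e) * ((g (br W e) Z - g (br Z W) e) / 2)) = (g (br W v) Z - g (br Z W) v) / 2"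
  using L.dual_basis_expand_functional[OF D1 v, of "\<lambda>e. (g (br W e) Z - g (br Z W) e) / 2"] W Z
  by (simp add: G.br_add_right G.br_scale_right G.g_add_left G.g_scale_left G.g_add_right G.g_scale_right
      G.br_closed algebra_simps add_divide_distrib diff_divide_distrib)

text \<open>The correction terms of the Gauss equation, traced over L, become traces over C.\<close>

lemma sum_sff_dual_basis:
  assumes D1: "L.dual_basis E1 d1" and D2: "C.dual_basis E2 d2" and Z: "Z \<in> L"
    and add: "\<And>v x y. v \<in> L \<Longrightarrow> x \<in> C \<Longrightarrow> y \<in> C \<Longrightarrow> \<psi> (x + y) v = \<psi> x v + \<psi> y v"
    and scale: "\<And>v x a. v \<in> L \<Longrightarrow> x \<in> C \<Longrightarrow> \<psi> (a *\<^sub>R x) v = a * \<psi> x v"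
    and F: "\<And>w. w \<in> E2 \<Longrightarrow> F w \<in> L" "\<And>w v. w \<in> E2 \<Longrightarrow> v \<in> L \<Longrightarrow> \<psi> w v = g (F w) v"
  shows "(\<Sum>e\<in>E1. \<psi> (sff e Z) (d1 e))
    = (\<Sum>w\<in>E2. (g (br (d2 w) (F w)) Z - g (br Z (d2 w)) (F w)) / 2)"
proof -
  note E1 = L.dual_basisD[OF D1] and E2 = C.dual_basisD[OF D2]
  have "(\<Sum>e\<in>E1. \<psi> (sff e Z) (d1 e))
      = (\<Sum>e\<in>E1. \<Sum>w\<in>E2. g (F w) (d1 e) * ((g (br (d2 w) e) Z - g (br Z (d2 w)) e) / 2))"
  proof (rule sum.cong[OF refl])
    fix e assume e: "e \<in> E1"
    then have "\<psi> (sff e Z) (d1 e) = (\<Sum>w\<in>E2. g (sff e Z) (d2 w) * \<psi> w (d1 e))"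
      using E1(2,4) Z add scale
      by (intro C.dual_basis_expand_functional[OF D2 sff_in_C]) auto
    also have "\<dots> = (\<Sum>w\<in>E2. g (F w) (d1 e) * ((g (br (d2 w) e) Z - g (br Z (d2 w)) e) / 2))"
      using e E1(2,4) E2(2,4) Z F by (intro sum.cong refl) (auto simp: g_sff)
    finally show "\<psi> (sff e Z) (d1 e)
      = (\<Sum>w\<in>E2. g (F w) (d1 e) * ((g (br (d2 w) e) Z - g (br Z (d2 w)) e) / 2))" .
  qed
  also have "\<dots> = (\<Sum>w\<in>E2. (g (br (d2 w) (F w)) Z - g (br Z (d2 w)) (F w)) / 2)"
  proof (subst sum.swap, rule sum.cong[OF refl])
    fix w assume "w \<in> E2"
    then show "(\<Sum>e\<in>E1. g (F w) (d1 e) * ((g (br (d2 w) e) Z - g (br Z (d2 w)) e) / 2))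
        = (g (br (d2 w) (F w)) Z - g (br Z (d2 w)) (F w)) / 2"
      using E2(4) Z F(1) by (intro sum_koszul_dual_basis[OF D1]) auto
  qed
  finally show ?thesis .
qed

lemma nabla_A_pairing_A:
  assumes "w \<in> A" "U \<in> G" "W \<in> A"
  shows "g (G.nabla w U) W = 0"
  using assms g_N_A[OF br_in_N[of w U], of W] g_N_A[OF br_in_N[of U W], of w] br_A_A[of W w]
  by (simp add: G.nabla_koszul G.koszul_def G.g_zero_left)

lemma nabla_A_pairing_N:
  assumes "w \<in> A" "Z \<in> G" "V \<in> N"
  shows "g (G.nabla w Z) V = (g (br w Z) V - g (G.adj w Z) V) / 2"
proof -
  have "g (br V w) Z = - g (G.adj w Z) V"
    using assms G.br_antisym[of V w] G.g_sym[of "br w V" Z] G.adj_pairing[of w Z V]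
    by (simp add: G.g_minus_left G.br_closed)
  then show ?thesis
    using assms g_N_A[OF br_in_N[of Z V], of w] by (simp add: G.nabla_koszul G.koszul_def)
qed

lemma nabla_pairing_A:
  assumes "W \<in> A" "Y \<in> G" "U \<in> G"
  shows "g (G.nabla Y U) W = (g (G.adj W Y) U + g (br W Y) U) / 2"
proof -
  have "g (br U W) Y = - g (G.adj W Y) U"
    using assms G.br_antisym[of U W] G.g_sym[of "br W U" Y] G.adj_pairing[of W Y U]
    by (simp add: G.g_minus_left G.br_closed)
  then show ?thesis
    using assms g_N_A[OF br_in_N[of Y U], of W] by (simp add: G.nabla_koszul G.koszul_def)
qed

lemma nabla_br_pairing_A:
  assumes "w \<in> A" "W \<in> A" "Y \<in> G" "Z \<in> G"
  shows "g (G.nabla (br w Y) Z) W = (g (br W (br w Y)) Z - g (br Z W) (br w Y)) / 2"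
  using assms g_N_A[OF br_in_N[of "br w Y" Z], of W]
  by (simp add: G.nabla_koszul G.koszul_def G.br_closed)

lemma curvature_A_koszul:
  assumes w: "w \<in> A" and W: "W \<in> A" and Y: "Y \<in> G" and Z: "Z \<in> G"
  shows "g (G.curv w Y Z) W = - (g (br w Z) (G.adj W Y) - g (G.adj w Z) (G.adj W Y)
      + g (br w Z) (br W Y) - g (G.adj w Z) (br W Y)) / 4
      - (g (br W (br w Y)) Z - g (br Z W) (br w Y)) / 2"
proof -
  have wZ: "G.nabla w Z \<in> G" using w Z by (simp add: G.nabla_in)
  have "g (G.curv w Y Z) W
      = g (G.nabla w (G.nabla Y Z)) W - g (G.nabla Y (G.nabla w Z)) W - g (G.nabla (br w Y) Z) W"
    using w W Y Z by (simp add: curvature_def G.g_diff_left G.nabla_in G.br_closed G.U_closed)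
  moreover have "g (G.nabla w (G.nabla Y Z)) W = 0"
    using w W Y Z by (simp add: nabla_A_pairing_A G.nabla_in)
  moreover have "g (G.nabla Y (G.nabla w Z)) W
      = (g (G.adj W Y) (G.nabla w Z) + g (br W Y) (G.nabla w Z)) / 2"
    using W Y wZ by (rule nabla_pairing_A)
  moreover have "g (G.adj W Y) (G.nabla w Z) = (g (br w Z) (G.adj W Y) - g (G.adj w Z) (G.adj W Y)) / 2"
    using nabla_A_pairing_N[OF w Z adj_A_in_N[OF W Y]] G.g_sym[OF wZ, of "G.adj W Y"] W Y
    by (simp add: G.adj_in)
  moreover have "g (br W Y) (G.nabla w Z) = (g (br w Z) (br W Y) - g (G.adj w Z) (br W Y)) / 2"
    using nabla_A_pairing_N[OF w Z br_in_N[of W Y]] G.g_sym[OF wZ, of "br W Y"] W Y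
    by (simp add: G.br_closed)
  ultimately show ?thesis
    using nabla_br_pairing_A[OF w W Y Z] by (simp add: field_simps)
qed

lemma adj_A_commute:
  assumes w: "w \<in> A" and W: "W \<in> A" and Y: "Y \<in> G" and Z: "Z \<in> G"
  shows "g Z (G.adj W (G.adj w Y)) = g Z (G.adj w (G.adj W Y))"
proof -
  have [simp]: "w \<in> G" "W \<in> G" using w W by auto
  have "g Z (G.adj W (G.adj w Y)) = g Y (br w (br W Z))"
    using Y Z by (simp add: G.g_sym[of Z] G.adj_pairing G.br_closed G.adj_in)
  also have "\<dots> = g Y (br W (br w Z))" using br_A_commute[OF w W Z] by simp
  also have "\<dots> = g Z (G.adj w (G.adj W Y))"
    using Y Z by (simp add: G.g_sym[of Z] G.adj_pairing G.br_closed G.adj_in)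
  finally show ?thesis .
qed

text \<open>Every term is rewritten as g Z (T Y) with T a composite of the ad w, ad W and their
  adjoints; the identity then follows from [ad w, ad W] = 0, its adjoint, and normality of
  ad w, ad W and ad (w + W).\<close>

lemma curvature_A:
  assumes w: "w \<in> A" and W: "W \<in> A" and Y: "Y \<in> G" and Z: "Z \<in> G"
    and normal: "normal_op G g (ad br w)" "normal_op G g (ad br W)" "normal_op G g (ad br (w + W))"
  shows "g (G.curv w Y Z) W = ((g (br W (br Y w)) Z - g (br Z W) (br Y w)) / 2
      - (g (br W (G.adj w Y)) Z - g (br Z W) (G.adj w Y)) / 2) / 2"
proof -
  have wG: "w \<in> G" and WG: "W \<in> G" using w W by auto
  note closed = G.br_closed G.adj_in
  have br_adj: "g (br Z V) x = - g Z (G.adj V x)" if "V \<in> G" "x \<in> G" for V x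
    using G.g_br_adj_right[OF that(1) Z that(2)] .
  have br_sym: "g (br V x) Z = g Z (br V x)" if "V \<in> G" "x \<in> G" for V x
    using that Z by (simp add: G.g_sym closed)
  have br_Y_w: "br Y w = - br w Y" using G.br_antisym[OF Y wG] .
  have target: "g (br W (br Y w)) Z = - g Z (br W (br w Y))"
    "g (br Z W) (br Y w) = g Z (G.adj W (br w Y))"
    "g (br W (G.adj w Y)) Z = g Z (br W (G.adj w Y))"
    "g (br Z W) (G.adj w Y) = - g Z (G.adj W (G.adj w Y))"
    unfolding br_Y_w using WG wG Y Z br_sym br_adj
    by (simp_all add: G.br_minus_right G.g_minus_left G.adj_minus G.g_minus_right closed)
  have koszul_terms: "g (br Z W) (br w Y) = - g Z (G.adj W (br w Y))"
    "g (br W (br w Y)) Z = g Z (br W (br w Y))"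
    "g (br w Z) (G.adj W Y) = g Z (G.adj w (G.adj W Y))"
    "g (G.adj w Z) (G.adj W Y) = g Z (br w (G.adj W Y))"
    "g (br w Z) (br W Y) = g Z (G.adj w (br W Y))"
    "g (G.adj w Z) (br W Y) = g Z (br w (br W Y))"
    using WG wG Y Z br_sym br_adj G.g_br_adj[OF wG Z] G.adj_pairing[OF wG Z] by (simp_all add: closed)
  have commute: "g Z (br w (br W Y)) = g Z (br W (br w Y))"
    using br_A_commute[OF w W Y] by simp
  have polarized: "g Z (br w (G.adj W Y)) + g Z (br W (G.adj w Y))
      = g Z (G.adj W (br w Y)) + g Z (G.adj w (br W Y))"
  proof -
    have "br w (G.adj W Y) + br W (G.adj w Y) = G.adj W (br w Y) + G.adj w (br W Y)"
      using G.normal_polarized[OF wG WG Y normal] .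
    then show ?thesis using wG WG Y Z by (simp add: G.g_add_right[symmetric] closed)
  qed
  show ?thesis
    unfolding curvature_A_koszul[OF w W Y Z] target koszul_terms commute adj_A_commute[OF w W Y Z]
    using polarized by (simp add: field_simps)
qed

lemma sum_dual_basis_ad_C:
  assumes D1: "L.dual_basis E1 d1" and c: "c \<in> C" and trace: "ltrace G (ad br c) = 0"
  shows "(\<Sum>e\<in>E1. g (br e c) (d1 e)) = 0" "(\<Sum>e\<in>E1. g (br c (d1 e)) e) = 0"
proof -
  note E1 = L.dual_basisD[OF D1]
  have "(\<Sum>e\<in>E1. g (br c e) (d1 e)) = 0"
    using L.ltrace_dual_basis[OF D1 ad_endomorphism_L] ltrace_L_ad_A[of c] c trace C_subset_A
    by (auto simp: ad_def)
  moreover have "g (br e c) (d1 e) = - g (br c e) (d1 e)" if "e \<in> E1" for e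
    using that c E1(2,4) G.br_antisym[of e c] by (auto simp: G.g_minus_left G.br_closed)
  ultimately show "(\<Sum>e\<in>E1. g (br e c) (d1 e)) = 0"
    by (simp add: sum_negf)
  show "(\<Sum>e\<in>E1. g (br c (d1 e)) e) = 0"
    using L.dual_basis_trace_swap[OF D1 ad_endomorphism_L[of c]] c \<open>(\<Sum>e\<in>E1. g (br c e) (d1 e)) = 0\<close>
    by (simp add: ad_def)
qed

lemma sum_curvature_L_directions:
  assumes D1: "L.dual_basis E1 d1" and D2: "C.dual_basis E2 d2" and Y: "Y \<in> L" and Z: "Z \<in> L"
    and trace: "ltrace G (ad br (sff Y Z)) = 0"
  shows "(\<Sum>e\<in>E1. g (G.curv e Y Z) (d1 e)) = ricci_tensor L br g Y Z
    - ((\<Sum>w\<in>E2. (g (br (d2 w) (br Y w)) Z - g (br Z (d2 w)) (br Y w)) / 2)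
     - (\<Sum>w\<in>E2. (g (br (d2 w) (G.adj w Y)) Z - g (br Z (d2 w)) (G.adj w Y)) / 2)) / 2"
proof -
  note E1 = L.dual_basisD[OF D1] and E2 = C.dual_basisD[OF D2]
  have sff: "sff Y Z \<in> C" using Y Z by (rule sff_in_C)
  have "(\<Sum>e\<in>E1. g (G.curv e Y Z) (d1 e)) = (\<Sum>e\<in>E1. g (L.curv e Y Z) (d1 e))
      + ((\<Sum>e\<in>E1. g (br e (sff Y Z)) (d1 e)) - (\<Sum>e\<in>E1. g (br (sff Y Z) (d1 e)) e)) / 2
      - ((\<Sum>e\<in>E1. g (br Y (sff e Z)) (d1 e)) - (\<Sum>e\<in>E1. g (br (sff e Z) (d1 e)) Y)) / 2"
    using E1(2,4) Y Z
    by (simp add: gauss_equation subset_iff sum.distrib sum_subtractf sum_divide_distrib[symmetric])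
  also have "(\<Sum>e\<in>E1. g (L.curv e Y Z) (d1 e)) = ricci_tensor L br g Y Z"
    using L.ricci_tensor_dual_basis[OF D1 Y Z] ..
  also have "(\<Sum>e\<in>E1. g (br Y (sff e Z)) (d1 e))
      = (\<Sum>w\<in>E2. (g (br (d2 w) (br Y w)) Z - g (br Z (d2 w)) (br Y w)) / 2)"
    using Y E2(2) C_subset_A br_in_N N_subset_L
    by (intro sum_sff_dual_basis[OF D1 D2 Z])
      (auto simp: G.br_add_right G.br_scale_right G.g_add_left G.g_scale_left G.br_closed subset_iff)
  also have "(\<Sum>e\<in>E1. g (br (sff e Z) (d1 e)) Y)
      = (\<Sum>w\<in>E2. (g (br (d2 w) (G.adj w Y)) Z - g (br Z (d2 w)) (G.adj w Y)) / 2)"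
    using Y E2(2) C_subset_A adj_A_in_N N_subset_L
    by (intro sum_sff_dual_basis[OF D1 D2 Z])
      (auto simp: G.br_add_left G.br_scale_left G.g_add_left G.g_scale_left G.br_closed subset_iff
        G.g_sym[of _ Y] G.adj_pairing)
  finally show ?thesis
    using sum_dual_basis_ad_C[OF D1 sff trace] by simp
qed

lemma sum_curvature_C_directions:
  assumes D2: "C.dual_basis E2 d2" and Y: "Y \<in> L" and Z: "Z \<in> L"
    and normal: "\<forall>X\<in>A. normal_op G g (ad br X)"
  shows "(\<Sum>w\<in>E2. g (G.curv w Y Z) (d2 w))
    = ((\<Sum>w\<in>E2. (g (br (d2 w) (br Y w)) Z - g (br Z (d2 w)) (br Y w)) / 2)
     - (\<Sum>w\<in>E2. (g (br (d2 w) (G.adj w Y)) Z - g (br Z (d2 w)) (G.adj w Y)) / 2)) / 2"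
proof -
  note E2 = C.dual_basisD[OF D2]
  have "g (G.curv w Y Z) (d2 w) = ((g (br (d2 w) (br Y w)) Z - g (br Z (d2 w)) (br Y w)) / 2
      - (g (br (d2 w) (G.adj w Y)) Z - g (br Z (d2 w)) (G.adj w Y)) / 2) / 2" if "w \<in> E2" for w
  proof -
    have "w \<in> A" "d2 w \<in> A" using that E2(2,4) C_subset_A by auto
    moreover have "w + d2 w \<in> A" using calculation subspace_A by (rule_tac subspace_add) auto
    ultimately show ?thesis
      using Y Z normal by (intro curvature_A) auto
  qed
  then have "(\<Sum>w\<in>E2. g (G.curv w Y Z) (d2 w)) = (\<Sum>w\<in>E2.
      ((g (br (d2 w) (br Y w)) Z - g (br Z (d2 w)) (br Y w)) / 2
      - (g (br (d2 w) (G.adj w Y)) Z - g (br Z (d2 w)) (G.adj w Y)) / 2) / 2)"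
    by (rule sum.cong[OF refl])
  then show ?thesis
    by (simp add: sum_subtractf sum_divide_distrib[symmetric])
qed

lemma ricci_tensor_L_eq:
  assumes normal: "\<forall>X\<in>A. normal_op G g (ad br X)" and trace_C: "\<forall>c\<in>C. ltrace G (ad br c) = 0"
    and Y: "Y \<in> L" and Z: "Z \<in> L"
  shows "ricci_tensor L br g Y Z = ricci_tensor G br g Y Z"
proof -
  obtain E1 d1 where D1: "L.dual_basis E1 d1" using L.dual_basis_exists by blast
  obtain E2 d2 where D2: "C.dual_basis E2 d2" using C.dual_basis_exists by blast
  note E1 = L.dual_basisD[OF D1] and E2 = C.dual_basisD[OF D2]
  have "ricci_tensor G br g Y Z = (\<Sum>e\<in>E1. g (G.curv e Y Z) (d1 e)) + (\<Sum>w\<in>E2. g (G.curv w Y Z) (d2 w))"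
    using G.ricci_tensor_dual_basis[OF dual_basis_union(2)[OF D1 D2]] Y Z
      sum_union_disjoint_cases[OF E1(1) E2(1) dual_basis_union(1)[OF D1 D2]] by simp
  then show ?thesis
    using sum_curvature_L_directions[OF D1 D2 Y Z] sum_curvature_C_directions[OF D2 Y Z normal]
      trace_C sff_in_C[OF Y Z] by simp
qed

end

theorem proposition1p16:
  fixes G N A B :: "'v::euclidean_space set"
    and br :: "'v \<Rightarrow> 'v \<Rightarrow> 'v"
    and g :: "'v \<Rightarrow> 'v \<Rightarrow> real"
    and H :: 'v
  assumes "solvable_lie G br"
    and "einstein G br g"
    and "standard_decomposition G br g N A"
    and "\<forall>X\<in>A. normal_op G g (ad br X)"
    and "H \<in> G" and "\<forall>v\<in>G. g H v = ltrace G (ad br v)"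
    and "subspace B" and "B \<subseteq> A" and "H \<in> B"
    and "\<forall>x\<in>B. (\<forall>y\<in>B. g x y = 0) \<longrightarrow> x = 0"
  shows "subalgebra {n + b | n b. n \<in> N \<and> b \<in> B} G br
       \<and> einstein {n + b | n b. n \<in> N \<and> b \<in> B} br g"
proof -
  obtain \<mu> where mla: "metric_lie_algebra G br g" and Ric: "\<And>Y. Y \<in> G \<Longrightarrow> ricci_op G br g Y = \<mu> *\<^sub>R Y"
    using assms(2) unfolding einstein_def by blast
  interpret standard_split G N A B br g
    using mla assms(3,7,8,10) unfolding standard_decomposition_def by unfold_locales blast+
  have trace_C: "\<forall>c\<in>C. ltrace G (ad br c) = 0"
    using assms(5,6,9) unfolding C_def by (auto simp: G.g_sym[of H])
  have "ricci_op L br g Y = \<mu> *\<^sub>R Y" if Y: "Y \<in> L" for Y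
  proof (rule L.ricci_op_eqI[OF Y])
    fix Z assume Z: "Z \<in> L"
    have "g (\<mu> *\<^sub>R Y) Z = ricci_tensor G br g Y Z"
      using G.ricci_op_in_and_pairing[of Y] Ric[of Y] Y Z by simp
    then show "g (\<mu> *\<^sub>R Y) Z = ricci_tensor L br g Y Z"
      using ricci_tensor_L_eq[OF assms(4) trace_C Y Z] by simp
  qed (use Y L.U_closed in simp)
  then have "einstein L br g"
    unfolding einstein_def metric_lie_algebra_def using L.lie L.metric by blast
  then show ?thesis using subalgebra_L unfolding L_def by simp
qed
end
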